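(* Let $(S,\varepsilon),(S',\varepsilon')\in\mathcal{SC}(\mathcal M)$ with $(S,\varepsilon)\le(S',\varepsilon')$ and $S'\subsetneq S$. Then $\operatorname{genus}(S',\varepsilon')<\operatorname{genus}(S,\varepsilon)$. Consequently $\mathcal{SC}(\mathcal M)$ is graded, with the degree of $(S,\varepsilon)$ equal to $\operatorname{genus}(\mathcal M)-\operatorname{genus}(S,\varepsilon)$. (In particular, for a finite graph $G$, the poset of strongly connected orientations of subgraphs is graded by $\operatorname{genus}(G)-\operatorname{genus}(H)$.)
   Context: Let $\mathcal M$ be a regular matroid on a finite ground set $E$, represented over $\mathbb R$ by a totally unimodular matrix $M$ with columns $c_e$, $e\in E$. $\operatorname{genus}(\mathcal M)=\dim\ker M$. An oriented submatroid is a pair $(S,\varepsilon)$ with $S\subseteq E$ and $\varepsilon:S\to\{\pm1\}$. It is strongly connected if for every $e\in S$ there is $w\in\mathbb Z_{\ge0}^S$ with $w_e\ge1$ and $\sum_{f\in S}w_f\varepsilon_f c_f=0$. The genus of $(S,\varepsilon)$ is $\dim\ker M_S$, where $M_S$ is the submatrix of columns indexed by $S$. $\mathcal{SC}(\mathcal M)$ is the set of strongly connected oriented submatroids, ordered by $(S,\varepsilon)\le(S',\varepsilon')$ iff $S'\subseteq S$ and $\varepsilon'=\varepsilon|_{S'}$. For a graph, the genus of a (possibly disconnected) subgraph $H$ (on all vertices) is the dimension of the kernel of its signed incidence matrix. *)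

theory Defs
  imports "Jordan_Normal_Form.DL_Submatrix" "Jordan_Normal_Form.Matrix_Kernel"
          "Jordan_Normal_Form.Determinant"
begin

text \<open>A real matrix M; ground set E = column indices {..<dim_col M}; column e is c_e.\<close>

definition totally_unimodular :: "real mat \<Rightarrow> bool" where
  "totally_unimodular M \<longleftrightarrow>
     (\<forall>I J. I \<subseteq> {..<dim_row M} \<longrightarrow> J \<subseteq> {..<dim_col M} \<longrightarrow> card I = card J \<longrightarrow>
        det (submatrix M I J) \<in> {-1, 0, 1})"

definition genus :: "real mat \<Rightarrow> nat" where
  "genus M = kernel_dim M"

definition oriented_submatroid :: "real mat \<Rightarrow> nat set \<Rightarrow> (nat \<Rightarrow> int) \<Rightarrow> bool" where
  "oriented_submatroid M S eps \<longleftrightarrow>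
     S \<subseteq> {..<dim_col M} \<and> (\<forall>f\<in>S. eps f = 1 \<or> eps f = -1) \<and> (\<forall>f. f \<notin> S \<longrightarrow> eps f = 0)"

definition strongly_connected :: "real mat \<Rightarrow> nat set \<Rightarrow> (nat \<Rightarrow> int) \<Rightarrow> bool" where
  "strongly_connected M S eps \<longleftrightarrow> oriented_submatroid M S eps \<and>
     (\<forall>e\<in>S. \<exists>w :: nat \<Rightarrow> nat. w e \<ge> 1 \<and>
        (\<forall>r<dim_row M. (\<Sum>f\<in>S. real (w f) * real_of_int (eps f) * M $$ (r, f)) = 0))"

definition SC :: "real mat \<Rightarrow> (nat set \<times> (nat \<Rightarrow> int)) set" where
  "SC M = {(S, eps). strongly_connected M S eps}"

definition genus_sub :: "real mat \<Rightarrow> nat set \<Rightarrow> nat" where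
  "genus_sub M S = kernel_dim (submatrix M UNIV S)"

definition sc_le :: "nat set \<times> (nat \<Rightarrow> int) \<Rightarrow> nat set \<times> (nat \<Rightarrow> int) \<Rightarrow> bool" where
  "sc_le x y \<longleftrightarrow> fst y \<subseteq> fst x \<and> (\<forall>f\<in>fst y. snd y f = snd x f)"

definition sc_less :: "nat set \<times> (nat \<Rightarrow> int) \<Rightarrow> nat set \<times> (nat \<Rightarrow> int) \<Rightarrow> bool" where
  "sc_less x y \<longleftrightarrow> sc_le x y \<and> x \<noteq> y"

definition sc_covers :: "real mat \<Rightarrow> nat set \<times> (nat \<Rightarrow> int) \<Rightarrow> nat set \<times> (nat \<Rightarrow> int) \<Rightarrow> bool" where
  "sc_covers M x y \<longleftrightarrow> x \<in> SC M \<and> y \<in> SC M \<and> sc_less x y \<and>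
     \<not> (\<exists>z\<in>SC M. sc_less x z \<and> sc_less z y)"

definition sc_degree :: "real mat \<Rightarrow> nat set \<times> (nat \<Rightarrow> int) \<Rightarrow> int" where
  "sc_degree M x = int (genus M) - int (genus_sub M (fst x))"

end

theory Submission
  imports Defs
begin

text \<open>Let \<open>W(S)\<close> be the space of kernel vectors of \<open>M\<close> supported on \<open>S\<close>; it is isomorphic to
  \<open>ker M\<^sub>S\<close>, so \<open>genus(S, \<epsilon>) = dim W(S)\<close>. Summing the weights witnessing strong connectivity
  gives a circulation \<open>P \<in> W(S)\<close> of sign \<open>\<epsilon>\<close> and support exactly \<open>S\<close>; for \<open>S' \<subset> S\<close> it is
  not in \<open>W(S')\<close>, so the genus drops strictly.

  If \<open>(S, \<epsilon>)\<close> covers \<open>(S', \<epsilon>')\<close>, every rational \<open>y \<in> W(S)\<close> lies in \<open>W(S') + \<real>P\<close>. Otherwise,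
  subtracting from \<open>y\<close> the multiple of \<open>P\<close> that makes it sign-conformal on \<open>S - S'\<close> with a zero
  there, and adding a large multiple of a circulation of \<open>(S', \<epsilon>')\<close>, yields a rational
  \<open>\<epsilon>\<close>-conformal kernel vector whose support lies strictly between \<open>S'\<close> and \<open>S\<close>; clearing
  denominators makes that support strongly connected, contradicting the cover. As \<open>M\<close> is totally
  unimodular its entries are rational, so \<open>W(S)\<close> is spanned by rational vectors and
  \<open>dim W(S) = dim W(S') + 1\<close>.\<close>

section \<open>Dimensions of nested subspaces\<close>

lemma (in vectorspace) subspace_finite_basis:
  assumes fd: "fin_dim" and sub: "subspace K U V"
  obtains B where "finite B" "B \<subseteq> U" "lin_indpt B" "span B = U" "vectorspace.dim K (vs U) = card B"
proof -
  interpret U: vectorspace K "vs U" using subspace_is_vs[OF sub] .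
  have submod: "submodule K U V" using sub by (simp add: subspace_def)
  have bounded: "finite A \<and> card A \<le> dim" if "A \<subseteq> carrier (vs U) \<and> U.lin_indpt A" for A
  proof -
    have "A \<subseteq> U" using that by simp
    moreover have "lin_indpt A" using that span_li_not_depend(2)[OF \<open>A \<subseteq> U\<close> submod] by simp
    moreover have "U \<subseteq> carrier V" using submod by (simp add: submodule_def)
    ultimately show ?thesis using li_le_dim[OF fd] by blast
  qed
  have "{} \<subseteq> carrier (vs U) \<and> U.lin_indpt {}" by (simp add: U.lin_dep_def)
  then obtain A where A: "finite A" "maximal A (\<lambda>S. S \<subseteq> carrier (vs U) \<and> U.lin_indpt S)"
    using maximal_exists[of "\<lambda>S. S \<subseteq> carrier (vs U) \<and> U.lin_indpt S" dim] bounded by blast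
  have gen: "U.gen_set A" by (rule U.max_li_is_gen[OF A(2)])
  have AU: "A \<subseteq> U" and li: "U.lin_indpt A" using A(2) by (auto simp: maximal_def)
  have "U.dim = card A" using U.dim_basis A(1) gen AU li by (simp add: U.basis_def)
  moreover have "lin_indpt A" using li span_li_not_depend(2)[OF AU submod] by simp
  moreover have "span A = U" using gen span_li_not_depend(1)[OF AU submod] by simp
  ultimately show thesis using that A(1) AU by blast
qed

lemma (in vectorspace) subspace_dim_less:
  assumes fd: "fin_dim" and sub: "subspace K U V" and sub': "subspace K U' V"
    and "U \<subseteq> U'" and x: "x \<in> U'" "x \<notin> U"
  shows "vectorspace.dim K (vs U) < vectorspace.dim K (vs U')"
proof -
  obtain B where B: "finite B" "B \<subseteq> U" "lin_indpt B" "span B = U" "vectorspace.dim K (vs U) = card B"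
    by (rule subspace_finite_basis[OF fd sub])
  obtain B' where B': "finite B'" "B' \<subseteq> U'" "lin_indpt B'" "span B' = U'"
    "vectorspace.dim K (vs U') = card B'"
    by (rule subspace_finite_basis[OF fd sub'])
  interpret U': vectorspace K "vs U'" using subspace_is_vs[OF sub'] .
  have submod: "submodule K U' V" using sub' by (simp add: subspace_def)
  have "U' \<subseteq> carrier V" using submod by (simp add: submodule_def)
  hence "lin_indpt (insert x B)"
    using lin_dep_iff_in_span[of B x] B x \<open>U \<subseteq> U'\<close> by auto
  moreover have xB: "insert x B \<subseteq> U'" using B(2) \<open>U \<subseteq> U'\<close> x by auto
  ultimately have "U'.lin_indpt (insert x B)" using span_li_not_depend(2)[OF xB submod] by simp
  moreover have "U'.fin_dim" unfolding U'.fin_dim_def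
    using B' span_li_not_depend(1)[OF B'(2) submod] by auto
  ultimately have "card (insert x B) \<le> U'.dim" using U'.li_le_dim xB by simp
  moreover have "x \<notin> B" using B(2) x by auto
  ultimately show ?thesis using B(1,5) by simp
qed

lemma (in vectorspace) subspace_dim_le_Suc:
  assumes fd: "fin_dim" and sub: "subspace K U V" and sub': "subspace K U' V"
    and P: "P \<in> carrier V" and U': "U' \<subseteq> span (insert P U)"
  shows "vectorspace.dim K (vs U') \<le> Suc (vectorspace.dim K (vs U))"
proof -
  obtain B where B: "finite B" "B \<subseteq> U" "lin_indpt B" "span B = U" "vectorspace.dim K (vs U) = card B"
    by (rule subspace_finite_basis[OF fd sub])
  obtain B' where B': "finite B'" "B' \<subseteq> U'" "lin_indpt B'" "span B' = U'"
    "vectorspace.dim K (vs U') = card B'"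
    by (rule subspace_finite_basis[OF fd sub'])
  have "U \<subseteq> carrier V" using sub by (simp add: subspace_def submodule_def)
  hence PB: "insert P B \<subseteq> carrier V" using P B(2) by auto
  define Z where "Z = span (insert P B)"
  have Z: "submodule K Z V" unfolding Z_def by (rule span_is_submodule[OF PB])
  interpret Z: vectorspace K "vs Z" using subspace_is_vs Z by (simp add: subspace_def vectorspace_axioms)
  have PBZ: "insert P B \<subseteq> Z" using in_own_span[OF PB] unfolding Z_def .
  have "U \<subseteq> Z" unfolding Z_def using span_is_monotone[of B "insert P B"] B(4) by auto
  hence "span (insert P U) \<subseteq> Z" using span_is_subset[OF _ Z] PBZ by blast
  hence B'Z: "B' \<subseteq> Z" using U' B'(2) by auto
  have li: "Z.lin_indpt B'" using B'(3) span_li_not_depend(2)[OF B'Z Z] by simp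
  have gen: "Z.gen_set (insert P B)" using span_li_not_depend(1)[OF PBZ Z] unfolding Z_def by simp
  have "card B' \<le> card (insert P B)"
    by (rule Z.li_smaller_than_gen[OF B'(1) _ _ _ li gen]) (use B(1) B'Z PBZ in auto)
  also have "\<dots> \<le> Suc (card B)" using B(1) by (simp add: card_insert_if)
  finally show ?thesis using B(5) B'(5) by simp
qed

section \<open>Kernel vectors supported on a set of columns\<close>

lemma index_mult_mat_vec_sum:
  assumes "v \<in> carrier_vec (dim_col A)" "r < dim_row A"
  shows "(A *\<^sub>v v) $ r = (\<Sum>j<dim_col A. A $$ (r, j) * v $ j)"
  using assms by (auto simp: scalar_prod_def lessThan_atLeast0 intro!: sum.cong)

definition supported_kernel :: "real mat \<Rightarrow> nat set \<Rightarrow> real vec set" where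
  "supported_kernel M S = {v \<in> mat_kernel M. \<forall>f<dim_col M. f \<notin> S \<longrightarrow> v $ f = 0}"

lemma supported_kernel_iff:
  "v \<in> supported_kernel M S \<longleftrightarrow> v \<in> carrier_vec (dim_col M) \<and> M *\<^sub>v v = 0\<^sub>v (dim_row M)
     \<and> (\<forall>f<dim_col M. f \<notin> S \<longrightarrow> v $ f = 0)"
  by (simp add: supported_kernel_def mat_kernel_def)

lemma supported_kernel_mono: "S' \<subseteq> S \<Longrightarrow> supported_kernel M S' \<subseteq> supported_kernel M S"
  by (auto simp: supported_kernel_def)

lemma supported_kernel_lincomb:
  assumes "u \<in> supported_kernel M S" "v \<in> supported_kernel M S"
  shows "a \<cdot>\<^sub>v u + b \<cdot>\<^sub>v v \<in> supported_kernel M S"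
proof -
  have M: "M \<in> carrier_mat (dim_row M) (dim_col M)" by auto
  have uv: "u \<in> carrier_vec (dim_col M)" "v \<in> carrier_vec (dim_col M)"
    using assms by (auto simp: supported_kernel_iff)
  have "M *\<^sub>v (a \<cdot>\<^sub>v u + b \<cdot>\<^sub>v v) = a \<cdot>\<^sub>v (M *\<^sub>v u) + b \<cdot>\<^sub>v (M *\<^sub>v v)"
    using uv by (simp add: mult_add_distrib_mat_vec[OF M] mult_mat_vec[OF M])
  thus ?thesis using assms uv by (auto simp: supported_kernel_iff)
qed

lemma supported_kernel_subspace:
  "subspace class_ring (supported_kernel M S) (module_vec TYPE(real) (dim_col M))"
proof -
  interpret V: vec_space "TYPE(real)" "dim_col M" .
  have "submodule class_ring (supported_kernel M S) V.V"
  proof (rule submodule.intro)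
    show "module class_ring V.V" by (rule V.module_axioms)
    show "supported_kernel M S \<subseteq> carrier V.V" by (auto simp: supported_kernel_iff)
    show "\<zero>\<^bsub>V.V\<^esub> \<in> supported_kernel M S" by (auto simp: supported_kernel_iff)
    fix a b assume "a \<in> supported_kernel M S" "b \<in> supported_kernel M S"
    thus "a \<oplus>\<^bsub>V.V\<^esub> b \<in> supported_kernel M S"
      using supported_kernel_lincomb[of a M S b 1 1] by simp
  next
    fix c x assume "x \<in> supported_kernel M S"
    thus "c \<odot>\<^bsub>V.V\<^esub> x \<in> supported_kernel M S"
      using supported_kernel_lincomb[of x M S x c 0] by (simp add: supported_kernel_iff)
  qed
  thus ?thesis unfolding subspace_def using V.vectorspace_axioms by simp
qed

lemma card_below_less_card:
  fixes S :: "nat set"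
  assumes "finite S" "f \<in> S"
  shows "card {a \<in> S. a < f} < card S"
  using assms by (intro psubset_card_mono) auto

lemma bij_betw_pick:
  assumes "finite S"
  shows "bij_betw (pick S) {..<card S} S"
proof (rule bij_betw_imageI)
  show "inj_on (pick S) {..<card S}"
    by (rule inj_onI) (metis card_pick lessThan_iff)
  show "pick S ` {..<card S} = S"
  proof (intro subset_antisym subsetI)
    fix f assume f: "f \<in> S"
    have "card {a \<in> S. a < f} \<in> {..<card S}" using card_below_less_card[OF assms f] by simp
    thus "f \<in> pick S ` {..<card S}" using pick_card_in_set[OF f] by force
  qed (use pick_in_set in auto)
qed

text \<open>Coordinate \<open>j\<close> of \<open>v\<close> is placed at \<open>pick S j\<close>, the \<open>j\<close>-th element of \<open>S\<close>, matching the
  column order of \<open>submatrix M UNIV S\<close>.\<close>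

definition zero_extend :: "nat \<Rightarrow> nat set \<Rightarrow> real vec \<Rightarrow> real vec" where
  "zero_extend n S v = vec n (\<lambda>f. if f \<in> S then v $ card {a \<in> S. a < f} else 0)"

lemma zero_extend_add:
  assumes "finite S" "v \<in> carrier_vec (card S)" "w \<in> carrier_vec (card S)"
  shows "zero_extend n S (v + w) = zero_extend n S v + zero_extend n S w"
  using assms card_below_less_card by (auto simp: zero_extend_def)

lemma zero_extend_smult:
  assumes "finite S" "v \<in> carrier_vec (card S)"
  shows "zero_extend n S (c \<cdot>\<^sub>v v) = c \<cdot>\<^sub>v zero_extend n S v"
  using assms card_below_less_card by (auto simp: zero_extend_def)

lemma zero_extend_pick:
  assumes "S \<subseteq> {..<n}" "j < card S"
  shows "zero_extend n S v $ pick S j = v $ j"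
proof -
  have "pick S j \<in> S" using assms pick_in_set by auto
  thus ?thesis using assms card_pick[of j S] by (auto simp: zero_extend_def)
qed

lemma mult_zero_extend:
  fixes M :: "real mat"
  assumes S: "S \<subseteq> {..<dim_col M}" and v: "v \<in> carrier_vec (card S)" and r: "r < dim_row M"
  shows "(M *\<^sub>v zero_extend (dim_col M) S v) $ r = (submatrix M UNIV S *\<^sub>v v) $ r"
proof -
  let ?A = "submatrix M UNIV S" and ?n = "dim_col M"
  have finS: "finite S" using S finite_subset by blast
  have dims: "dim_row ?A = dim_row M" "dim_col ?A = card S"
    unfolding dim_submatrix using S by (auto intro: arg_cong[where f = card])
  have entry: "?A $$ (r, j) = M $$ (r, pick S j)" if "j < card S" for j
    using r that dims unfolding dim_submatrix by (subst submatrix_index) (auto simp: pick_UNIV)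
  have "(M *\<^sub>v zero_extend ?n S v) $ r = (\<Sum>f<?n. M $$ (r, f) * zero_extend ?n S v $ f)"
    using r by (intro index_mult_mat_vec_sum) (auto simp: zero_extend_def)
  also have "\<dots> = (\<Sum>f\<in>S. M $$ (r, f) * zero_extend ?n S v $ f)"
    using S by (intro sum.mono_neutral_right) (auto simp: zero_extend_def)
  also have "\<dots> = (\<Sum>j<card S. M $$ (r, pick S j) * zero_extend ?n S v $ pick S j)"
    by (rule sum.reindex_bij_betw[OF bij_betw_pick[OF finS], symmetric])
  also have "\<dots> = (\<Sum>j<card S. ?A $$ (r, j) * v $ j)"
    using S by (intro sum.cong) (auto simp: zero_extend_pick entry)
  also have "\<dots> = (?A *\<^sub>v v) $ r" using v r dims index_mult_mat_vec_sum[of v ?A r] by simp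
  finally show ?thesis .
qed

lemma zero_extend_bij_betw:
  fixes M :: "real mat"
  assumes S: "S \<subseteq> {..<dim_col M}"
  shows "bij_betw (zero_extend (dim_col M) S) (mat_kernel (submatrix M UNIV S)) (supported_kernel M S)"
proof -
  define n where "n = dim_col M"
  define A where "A = submatrix M UNIV S"
  have finS: "finite S" using S finite_subset by blast
  have dims: "dim_row A = dim_row M" "dim_col A = card S"
    unfolding A_def dim_submatrix using S by (auto intro: arg_cong[where f = card])
  let ?T = "zero_extend n S"
  have kernel_iff: "?T v \<in> supported_kernel M S \<longleftrightarrow> v \<in> mat_kernel A"
    if v: "v \<in> carrier_vec (card S)" for v
  proof -
    have "M *\<^sub>v ?T v = 0\<^sub>v (dim_row M) \<longleftrightarrow> A *\<^sub>v v = 0\<^sub>v (dim_row M)"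
      using mult_zero_extend[OF S] v dims by (auto simp: vec_eq_iff A_def n_def)
    thus ?thesis using v dims
      by (auto simp: supported_kernel_iff mat_kernel_def zero_extend_def n_def)
  qed
  have "inj_on ?T (mat_kernel A)"
  proof (rule inj_onI)
    fix v w assume "v \<in> mat_kernel A" "w \<in> mat_kernel A" "?T v = ?T w"
    thus "v = w"
      using zero_extend_pick[OF S[folded n_def]] dims
      by (auto simp: mat_kernel_def intro!: eq_vecI) metis
  qed
  moreover have "?T ` mat_kernel A = supported_kernel M S"
  proof (intro subset_antisym subsetI)
    fix u assume u: "u \<in> supported_kernel M S"
    define v where "v = vec (card S) (\<lambda>j. u $ pick S j)"
    have "?T v = u"
      using u S pick_card_in_set card_below_less_card[OF finS]
      by (auto simp: supported_kernel_iff zero_extend_def v_def n_def intro!: eq_vecI)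
    moreover have "v \<in> mat_kernel A" using kernel_iff[of v] u \<open>?T v = u\<close> by (simp add: v_def)
    ultimately show "u \<in> ?T ` mat_kernel A" by blast
  qed (use kernel_iff dims in \<open>auto simp: mat_kernel_def\<close>)
  ultimately show ?thesis unfolding bij_betw_def A_def n_def by blast
qed

lemma genus_sub_eq_dim:
  fixes M :: "real mat"
  assumes S: "S \<subseteq> {..<dim_col M}"
  shows "genus_sub M S = vectorspace.dim class_ring
    ((module_vec TYPE(real) (dim_col M))\<lparr>carrier := supported_kernel M S\<rparr>)"
proof -
  define n where "n = dim_col M"
  define A where "A = submatrix M UNIV S"
  define W where "W = supported_kernel M S"
  have A: "A \<in> carrier_mat (dim_row M) (card S)" unfolding A_def
    by (rule carrier_matI) (use S in \<open>auto simp: dim_submatrix intro: arg_cong[where f = card]\<close>)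
  interpret K: kernel "dim_row M" "card S" A by unfold_locales (rule A)
  interpret V: vec_space "TYPE(real)" n .
  interpret W: vectorspace class_ring "V.vs W"
    using V.subspace_is_vs supported_kernel_subspace unfolding W_def n_def by blast
  have bij: "bij_betw (zero_extend n S) (mat_kernel A) W"
    using zero_extend_bij_betw[OF S] unfolding A_def W_def n_def .
  have "linear_map class_ring K.VK (V.vs W) (zero_extend n S)"
  proof (intro linear_map.intro mod_hom.intro mod_hom_axioms.intro)
    show "zero_extend n S \<in> module_hom class_ring K.VK (V.vs W)"
      using bij_betw_apply[OF bij] zero_extend_add zero_extend_smult finite_subset[OF S] A
      by (auto simp: module_hom_def mat_kernel_def module_vec_simps)
  qed (use K.Ker.vectorspace_axioms W.vectorspace_axioms in \<open>auto simp: vectorspace_def\<close>)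
  then interpret T: linear_map class_ring K.VK "V.vs W" "zero_extend n S" .
  have "K.Ker.fin_dim"
    using kernel_basis_exists[OF A] unfolding K.Ker.fin_dim_def K.Ker.basis_def by auto
  hence "K.dim = W.dim" by (rule T.dim_eq) (use bij in \<open>auto simp: bij_betw_def\<close>)
  thus ?thesis unfolding genus_sub_def A_def[symmetric] kernel_dim_def W_def n_def using A by simp
qed

section \<open>Rational kernel vectors\<close>

definition rational_vec :: "real vec \<Rightarrow> bool" where
  "rational_vec v \<longleftrightarrow> (\<forall>i<dim_vec v. v $ i \<in> \<rat>)"

definition rational_mat :: "real mat \<Rightarrow> bool" where
  "rational_mat M \<longleftrightarrow> (\<forall>r<dim_row M. \<forall>f<dim_col M. M $$ (r, f) \<in> \<rat>)"

definition rat_independent :: "nat \<Rightarrow> (nat \<Rightarrow> real) \<Rightarrow> bool" where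
  "rat_independent k b \<longleftrightarrow>
     (\<forall>q. (\<forall>j<k. q j \<in> \<rat>) \<longrightarrow> (\<Sum>j<k. q j * b j) = 0 \<longrightarrow> (\<forall>j<k. q j = 0))"

lemma rat_independent_extend:
  assumes b: "rat_independent k b"
    and x: "\<nexists>d. (\<forall>j<k. d j \<in> \<rat>) \<and> x = (\<Sum>j<k. d j * b j)"
  shows "rat_independent (Suc k) (b(k := x))"
  unfolding rat_independent_def
proof (rule allI, intro impI)
  fix q :: "nat \<Rightarrow> real"
  assume q: "\<forall>j<Suc k. q j \<in> \<rat>" and "(\<Sum>j<Suc k. q j * (b(k := x)) j) = 0"
  hence rel: "(\<Sum>j<k. q j * b j) + q k * x = 0" by simp
  have "q k = 0"
  proof (rule ccontr)
    assume "q k \<noteq> 0"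
    moreover have "q k * x = - (\<Sum>j<k. q j * b j)" using rel by linarith
    ultimately have "x = - (\<Sum>j<k. q j * b j) / q k" by (metis eq_divide_eq mult.commute)
    also have "\<dots> = (\<Sum>j<k. (- q j / q k) * b j)" by (simp add: sum_divide_distrib sum_negf)
    finally have "x = (\<Sum>j<k. (- q j / q k) * b j)" .
    moreover have "\<forall>j<k. - q j / q k \<in> \<rat>" using q by simp
    ultimately show False using x by (blast intro: exI[of _ "\<lambda>j. - q j / q k"])
  qed
  moreover have "\<forall>j<k. q j = 0"
    using b q rel \<open>q k = 0\<close> by (simp add: rat_independent_def)
  ultimately show "\<forall>j<Suc k. q j = 0" by (simp add: less_Suc_eq)
qed

lemma rat_independent_expansion:
  fixes x :: "nat \<Rightarrow> real"
  shows "\<exists>k b c. rat_independent k b \<and> (\<forall>i<n. \<forall>j<k. c i j \<in> \<rat>)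
                \<and> (\<forall>i<n. x i = (\<Sum>j<k. c i j * b j))"
proof (induction n)
  case 0
  show ?case by (rule exI[of _ 0]) (auto simp: rat_independent_def)
next
  case (Suc n)
  then obtain k b c where b: "rat_independent k b" and c: "\<forall>i<n. \<forall>j<k. c i j \<in> \<rat>"
    and x: "\<forall>i<n. x i = (\<Sum>j<k. c i j * b j)" by blast
  show ?case
  proof (cases "\<exists>d. (\<forall>j<k. d j \<in> \<rat>) \<and> x n = (\<Sum>j<k. d j * b j)")
    case True
    then obtain d where "\<forall>j<k. d j \<in> \<rat>" "x n = (\<Sum>j<k. d j * b j)" by blast
    hence "(\<forall>i<Suc n. \<forall>j<k. (c(n := d)) i j \<in> \<rat>) \<and> (\<forall>i<Suc n. x i = (\<Sum>j<k. (c(n := d)) i j * b j))"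
      using c x by (simp add: less_Suc_eq)
    thus ?thesis using b by blast
  next
    case False
    define c' :: "nat \<Rightarrow> nat \<Rightarrow> real"
      where "c' i j = (if j = k then (if i = n then 1 else 0) else if i = n then 0 else c i j)" for i j
    have "\<forall>i<Suc n. \<forall>j<Suc k. c' i j \<in> \<rat>" using c by (simp add: c'_def)
    moreover have "\<forall>i<Suc n. x i = (\<Sum>j<Suc k. c' i j * (b(k := x n)) j)"
      using x by (auto simp: c'_def less_Suc_eq intro: sum.cong)
    moreover have "rat_independent (Suc k) (b(k := x n))"
      by (rule rat_independent_extend[OF b False])
    ultimately show ?thesis by blast
  qed
qed

lemma rat_independent_coefficients_vanish:
  assumes b: "rat_independent k b" and I: "finite I"
    and a: "\<forall>i\<in>I. a i \<in> \<rat>" and c: "\<forall>i\<in>I. \<forall>j<k. c i j \<in> \<rat>"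
    and zero: "(\<Sum>i\<in>I. a i * (\<Sum>j<k. c i j * b j)) = 0" and j: "j < k"
  shows "(\<Sum>i\<in>I. a i * c i j) = 0"
proof -
  define q where "q j = (\<Sum>i\<in>I. a i * c i j)" for j
  have "(\<Sum>j<k. q j * b j) = (\<Sum>i\<in>I. a i * (\<Sum>j<k. c i j * b j))"
    by (simp add: q_def sum_distrib_left sum_distrib_right sum.swap[of _ I] mult.assoc)
  hence "(\<Sum>j<k. q j * b j) = 0" using zero by simp
  moreover have "\<forall>j<k. q j \<in> \<rat>" using a c by (auto simp: q_def intro: Rats_sum Rats_mult)
  ultimately have "q j = 0"
    using b[unfolded rat_independent_def, rule_format, of q j] j by blast
  thus ?thesis by (simp add: q_def)
qed

text \<open>Expanding the coordinates of \<open>v\<close> over a \<open>\<rat>\<close>-independent family, every rational linear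
  condition satisfied by \<open>v\<close> is satisfied by each coefficient vector separately.\<close>

lemma supported_kernel_rational_expansion:
  assumes M: "rational_mat M" and v: "v \<in> supported_kernel M S"
  shows "\<exists>(k::nat) b y. (\<forall>j<k. y j \<in> supported_kernel M S \<and> rational_vec (y j))
           \<and> (\<forall>i<dim_col M. v $ i = (\<Sum>j<k. b j * y j $ i))"
proof -
  define n where "n = dim_col M"
  obtain k :: nat and b c where b: "rat_independent k b" and c: "\<forall>i<n. \<forall>j<k. c i j \<in> \<rat>"
    and vc: "\<forall>i<n. v $ i = (\<Sum>j<k. c i j * b j)"
    using rat_independent_expansion[of n "\<lambda>i. v $ i"] by blast
  define y where "y j = vec n (\<lambda>i. c i j)" for j
  have v': "v \<in> carrier_vec n" "M *\<^sub>v v = 0\<^sub>v (dim_row M)" "\<forall>f<n. f \<notin> S \<longrightarrow> v $ f = 0"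
    using v by (auto simp: supported_kernel_iff n_def)
  have "y j \<in> supported_kernel M S" if j: "j < k" for j
  proof -
    have "(M *\<^sub>v y j) $ r = 0" if r: "r < dim_row M" for r
    proof -
      have "(M *\<^sub>v v) $ r = (\<Sum>i<n. M $$ (r, i) * v $ i)"
        unfolding n_def by (rule index_mult_mat_vec_sum) (use v' r in \<open>auto simp: n_def\<close>)
      hence "(\<Sum>i<n. M $$ (r, i) * (\<Sum>j<k. c i j * b j)) = (M *\<^sub>v v) $ r"
        using vc by simp
      hence "(\<Sum>i<n. M $$ (r, i) * c i j) = 0"
        using rat_independent_coefficients_vanish[OF b _ _ _ _ j, of "{..<n}" "\<lambda>i. M $$ (r, i)" c]
          M r c v' by (simp add: rational_mat_def n_def)
      moreover have "(M *\<^sub>v y j) $ r = (\<Sum>i<n. M $$ (r, i) * y j $ i)"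
        unfolding n_def by (rule index_mult_mat_vec_sum) (use r in \<open>auto simp: y_def n_def\<close>)
      ultimately show ?thesis by (simp add: y_def)
    qed
    moreover have "y j $ f = 0" if "f < n" "f \<notin> S" for f
      using rat_independent_coefficients_vanish[OF b _ _ _ _ j, of "{f}" "\<lambda>_. 1" c] c vc v' that
      by (simp add: y_def)
    ultimately show ?thesis by (auto simp: supported_kernel_iff y_def n_def intro!: eq_vecI)
  qed
  moreover have "rational_vec (y j)" if "j < k" for j
    using c that by (simp add: rational_vec_def y_def)
  moreover have "\<forall>i<dim_col M. v $ i = (\<Sum>j<k. b j * y j $ i)"
    using vc by (simp add: y_def mult.commute n_def)
  ultimately show ?thesis by blast
qed

lemma supported_kernel_subset_submodule:
  assumes M: "rational_mat M"
    and Z: "submodule class_ring Z (module_vec TYPE(real) (dim_col M))"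
    and rational: "\<And>y. y \<in> supported_kernel M S \<Longrightarrow> rational_vec y \<Longrightarrow> y \<in> Z"
  shows "supported_kernel M S \<subseteq> Z"
proof
  fix v assume v: "v \<in> supported_kernel M S"
  define n where "n = dim_col M"
  interpret V: vec_space "TYPE(real)" n .
  interpret Z: submodule class_ring Z V.V using Z unfolding n_def .
  obtain k :: nat and b y where y: "\<forall>j<k. y j \<in> supported_kernel M S \<and> rational_vec (y j)"
    and vy: "\<forall>i<n. v $ i = (\<Sum>j<k. b j * y j $ i)"
    using supported_kernel_rational_expansion[OF M v] unfolding n_def by blast
  have yZ: "y j \<in> Z" "y j \<in> carrier_vec n" if "j < k" for j
    using y that rational by (auto simp: supported_kernel_iff n_def)
  define prefix_sum where "prefix_sum t = vec n (\<lambda>i. \<Sum>j<t. b j * y j $ i)" for t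
  have "prefix_sum t \<in> Z" if "t \<le> k" for t
    using that
  proof (induction t)
    case 0
    thus ?case using Z.zero_closed by (simp add: prefix_sum_def zero_vec_def)
  next
    case (Suc t)
    have "prefix_sum (Suc t) = prefix_sum t + b t \<cdot>\<^sub>v y t"
      using yZ(2)[of t] Suc.prems by (auto simp: prefix_sum_def)
    thus ?case using Suc Z.m_closed Z.smult_closed yZ(1)[of t] by simp
  qed
  moreover have "prefix_sum k = v" using vy v by (auto simp: prefix_sum_def supported_kernel_iff n_def)
  ultimately show "v \<in> Z" by auto
qed

lemma totally_unimodular_entry:
  assumes TU: "totally_unimodular M" and r: "r < dim_row M" and f: "f < dim_col M"
  shows "M $$ (r, f) \<in> {-1, 0, 1}"
proof -
  have rows: "{i. i < dim_row M \<and> i \<in> {r}} = {r}" and cols: "{j. j < dim_col M \<and> j \<in> {f}} = {f}"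
    using r f by blast+
  have single: "submatrix M {r} {f} \<in> carrier_mat 1 1" unfolding submatrix_def rows cols by simp
  have "pick {r} 0 = r" "pick {f} 0 = f" by (auto intro!: Least_equality)
  hence "submatrix M {r} {f} $$ (0, 0) = M $$ (r, f)"
    by (subst submatrix_index) (unfold rows cols, simp_all)
  hence "det (submatrix M {r} {f}) = M $$ (r, f)" using det_single[OF single] by simp
  moreover have "det (submatrix M {r} {f}) \<in> {-1, 0, 1}"
    using TU r f unfolding totally_unimodular_def by simp
  ultimately show ?thesis by simp
qed

lemma totally_unimodular_rational: "totally_unimodular M \<Longrightarrow> rational_mat M"
  using totally_unimodular_entry unfolding rational_mat_def by fastforce

lemma Rats_common_denominator:
  fixes F :: "real set"
  assumes "finite F" "F \<subseteq> \<rat>"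
  shows "\<exists>N::nat. N > 0 \<and> (\<forall>x\<in>F. real N * x \<in> \<int>)"
  using assms
proof (induction F rule: finite_induct)
  case empty
  show ?case by (rule exI[of _ 1]) simp
next
  case (insert x F)
  then obtain N where N: "N > 0" "\<forall>y\<in>F. real N * y \<in> \<int>" by auto
  obtain a b where ab: "b > 0" "x = of_int a / of_int b"
    using insert.prems by (auto elim: Rats_cases')
  have "real (nat b) = of_int b" using ab(1) by simp
  hence eq: "real (N * nat b) * y = of_int b * (real N * y)" for y by (simp add: mult_ac)
  have "real (N * nat b) * y \<in> \<int>" if "y \<in> F" for y
    unfolding eq by (rule Ints_mult[OF Ints_of_int N(2)[rule_format, OF that]])
  moreover have "real (N * nat b) * x \<in> \<int>" using ab by simp
  ultimately show ?case using N(1) ab(1) by (intro exI[of _ "N * nat b"]) auto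
qed

section \<open>Circulations of oriented submatroids\<close>

lemma oriented_submatroid_sign_square:
  assumes "oriented_submatroid M S eps" "f \<in> S"
  shows "real_of_int (eps f) * real_of_int (eps f) = 1"
  using assms by (auto simp: oriented_submatroid_def)

text \<open>Since \<open>eps\<close> vanishes off \<open>S\<close>, the vector \<open>signed_vec n p eps\<close> is supported on \<open>S\<close>.\<close>

definition signed_vec :: "nat \<Rightarrow> (nat \<Rightarrow> nat) \<Rightarrow> (nat \<Rightarrow> int) \<Rightarrow> real vec" where
  "signed_vec n p eps = vec n (\<lambda>f. real (p f) * real_of_int (eps f))"

lemma signed_vec_in_supported_kernel:
  assumes os: "oriented_submatroid M S eps"
    and rows: "\<forall>r<dim_row M. (\<Sum>f\<in>S. real (p f) * real_of_int (eps f) * M $$ (r, f)) = 0"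
  shows "signed_vec (dim_col M) p eps \<in> supported_kernel M S"
proof -
  let ?P = "signed_vec (dim_col M) p eps"
  have S: "S \<subseteq> {..<dim_col M}" and off: "\<forall>f. f \<notin> S \<longrightarrow> eps f = 0"
    using os by (auto simp: oriented_submatroid_def)
  have "(M *\<^sub>v ?P) $ r = 0" if r: "r < dim_row M" for r
  proof -
    have "(M *\<^sub>v ?P) $ r = (\<Sum>f<dim_col M. M $$ (r, f) * ?P $ f)"
      by (rule index_mult_mat_vec_sum) (use r in \<open>auto simp: signed_vec_def\<close>)
    also have "\<dots> = (\<Sum>f\<in>S. real (p f) * real_of_int (eps f) * M $$ (r, f))"
      using S off by (intro sum.mono_neutral_cong_right) (auto simp: signed_vec_def)
    finally show ?thesis using rows r by simp
  qed
  thus ?thesis using off by (auto simp: supported_kernel_iff signed_vec_def intro!: eq_vecI)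
qed

lemma signed_vec_sign_ge_one:
  assumes os: "oriented_submatroid M S eps" and S: "S \<subseteq> {..<n}" and p: "\<forall>f\<in>S. 1 \<le> p f"
  shows "\<forall>f\<in>S. 1 \<le> real_of_int (eps f) * signed_vec n p eps $ f"
proof
  fix f assume f: "f \<in> S"
  have "real_of_int (eps f) * signed_vec n p eps $ f
      = real (p f) * (real_of_int (eps f) * real_of_int (eps f))"
    using f S by (auto simp: signed_vec_def)
  thus "1 \<le> real_of_int (eps f) * signed_vec n p eps $ f"
    using oriented_submatroid_sign_square[OF os f] p f by simp
qed

lemma rational_signed_vec: "rational_vec (signed_vec n p eps)"
  by (simp add: rational_vec_def signed_vec_def)

lemma strongly_connected_positive_circulation:
  assumes sc: "strongly_connected M S eps"
  obtains p where "\<forall>f\<in>S. 1 \<le> p f" "signed_vec (dim_col M) p eps \<in> supported_kernel M S"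
proof -
  have os: "oriented_submatroid M S eps" using sc by (simp add: strongly_connected_def)
  hence finS: "finite S" by (auto simp: oriented_submatroid_def intro: finite_subset)
  obtain w where w: "\<And>e. e \<in> S \<Longrightarrow> 1 \<le> w e e"
    "\<And>e r. e \<in> S \<Longrightarrow> r < dim_row M \<Longrightarrow>
       (\<Sum>f\<in>S. real (w e f) * real_of_int (eps f) * M $$ (r, f)) = 0"
    using sc unfolding strongly_connected_def by metis
  define p where "p f = (\<Sum>e\<in>S. w e f)" for f
  have "1 \<le> p f" if "f \<in> S" for f
    using w(1)[OF that] member_le_sum[of f S "\<lambda>e. w e f"] finS that by (simp add: p_def)
  moreover have "(\<Sum>f\<in>S. real (p f) * real_of_int (eps f) * M $$ (r, f)) = 0" if "r < dim_row M" for r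
  proof -
    have "(\<Sum>f\<in>S. real (p f) * real_of_int (eps f) * M $$ (r, f))
        = (\<Sum>f\<in>S. \<Sum>e\<in>S. real (w e f) * real_of_int (eps f) * M $$ (r, f))"
      by (simp add: p_def of_nat_sum sum_distrib_right)
    also have "\<dots> = (\<Sum>e\<in>S. \<Sum>f\<in>S. real (w e f) * real_of_int (eps f) * M $$ (r, f))"
      by (rule sum.swap)
    finally show ?thesis using w(2) that by simp
  qed
  ultimately show thesis using that signed_vec_in_supported_kernel[OF os] by blast
qed

text \<open>The weights are the entries of \<open>\<bar>z\<bar>\<close> after clearing denominators.\<close>

lemma strongly_connected_if_conformal_kernel_vector:
  assumes os: "oriented_submatroid M T eps"
    and z: "z \<in> supported_kernel M T" "rational_vec z"
    and pos: "\<forall>f\<in>T. 0 < real_of_int (eps f) * z $ f"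
  shows "strongly_connected M T eps"
proof -
  define n where "n = dim_col M"
  have T: "T \<subseteq> {..<n}" using os by (simp add: oriented_submatroid_def n_def)
  have zc: "z \<in> carrier_vec n" using z(1) by (simp add: supported_kernel_iff n_def)
  obtain N :: nat where N: "N > 0" "\<forall>x\<in>(\<lambda>f. z $ f) ` {..<n}. real N * x \<in> \<int>"
    using Rats_common_denominator[of "(\<lambda>f. z $ f) ` {..<n}"] z(2) zc
    by (auto simp: rational_vec_def)
  define w where "w f = nat \<lfloor>real N * (real_of_int (eps f) * z $ f)\<rfloor>" for f
  have w: "real (w f) = real N * (real_of_int (eps f) * z $ f) \<and> 1 \<le> w f" if f: "f \<in> T" for f
  proof -
    have "real N * (real_of_int (eps f) * z $ f) = real_of_int (eps f) * (real N * z $ f)" by simp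
    moreover have "real N * z $ f \<in> \<int>" using N(2) f T by auto
    ultimately obtain m where m: "real N * (real_of_int (eps f) * z $ f) = of_int m"
      by (metis Ints_cases Ints_mult Ints_of_int)
    moreover have "0 < real N * (real_of_int (eps f) * z $ f)" using N(1) pos f by simp
    ultimately show ?thesis by (simp add: w_def)
  qed
  have "(\<Sum>f\<in>T. real (w f) * real_of_int (eps f) * M $$ (r, f)) = 0" if r: "r < dim_row M" for r
  proof -
    have "(\<Sum>f\<in>T. real (w f) * real_of_int (eps f) * M $$ (r, f))
        = real N * (\<Sum>f\<in>T. M $$ (r, f) * z $ f)"
      unfolding sum_distrib_left
    proof (rule sum.cong)
      fix f assume f: "f \<in> T"
      have "real (w f) * real_of_int (eps f) * M $$ (r, f)
          = real N * (real_of_int (eps f) * real_of_int (eps f)) * (M $$ (r, f) * z $ f)"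
        using w[OF f] by (simp add: mult_ac)
      thus "real (w f) * real_of_int (eps f) * M $$ (r, f) = real N * (M $$ (r, f) * z $ f)"
        using oriented_submatroid_sign_square[OF os f] by simp
    qed simp
    also have "(\<Sum>f\<in>T. M $$ (r, f) * z $ f) = (\<Sum>f<n. M $$ (r, f) * z $ f)"
      using T z(1) by (intro sum.mono_neutral_left) (auto simp: supported_kernel_iff n_def)
    also have "\<dots> = (M *\<^sub>v z) $ r"
      unfolding n_def by (rule index_mult_mat_vec_sum[symmetric]) (use zc r in \<open>auto simp: n_def\<close>)
    also have "\<dots> = 0" using z(1) r by (simp add: supported_kernel_iff)
    finally show ?thesis by simp
  qed
  thus ?thesis using os w unfolding strongly_connected_def by blast
qed

section \<open>Genus along covers in \<open>SC(M)\<close>\<close>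

lemma supported_kernel_diff_smult:
  assumes "u \<in> supported_kernel M S" "v \<in> supported_kernel M S"
  shows "u - c \<cdot>\<^sub>v v \<in> supported_kernel M S"
proof -
  have "u - c \<cdot>\<^sub>v v = 1 \<cdot>\<^sub>v u + (- c) \<cdot>\<^sub>v v"
    using assms by (auto simp: supported_kernel_iff intro!: eq_vecI)
  thus ?thesis using supported_kernel_lincomb[OF assms] by metis
qed

text \<open>The vector \<open>t P - y\<close>, with \<open>t\<close> the largest ratio \<open>y\<^sub>f / P\<^sub>f\<close> over \<open>S - S'\<close>, has the sign
  pattern of \<open>P\<close> on \<open>S - S'\<close> but vanishes somewhere there.\<close>

lemma exists_kernel_vector_nonneg_on_difference:
  fixes e :: "nat \<Rightarrow> real"
  assumes sub: "S' \<subset> S" and S: "S \<subseteq> {..<dim_col M}" and e: "\<forall>f\<in>S. e f = 1 \<or> e f = -1"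
    and P: "P \<in> supported_kernel M S" "rational_vec P" "\<forall>f\<in>S. 0 < e f * P $ f"
    and y: "y \<in> supported_kernel M S" "rational_vec y"
    and y_notin: "\<forall>c. y - c \<cdot>\<^sub>v P \<notin> supported_kernel M S'"
  obtains u where "u \<in> supported_kernel M S" "rational_vec u" "\<forall>f\<in>S - S'. 0 \<le> e f * u $ f"
    "\<exists>g\<in>S - S'. u $ g = 0" "\<exists>h\<in>S - S'. 0 < e h * u $ h"
proof -
  define D where "D = S - S'"
  have D: "finite D" "D \<noteq> {}" using sub S by (auto simp: D_def intro: finite_subset)
  define ratio where "ratio f = (e f * y $ f) / (e f * P $ f)" for f
  define t where "t = Max (ratio ` D)"
  have "t \<in> ratio ` D" unfolding t_def using D by (intro Max_in) auto
  then obtain g where g: "g \<in> D" "ratio g = t" by auto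
  have ratio_le: "ratio f \<le> t" if "f \<in> D" for f using D that by (simp add: t_def)
  define u where "u = t \<cdot>\<^sub>v P + (-1) \<cdot>\<^sub>v y"
  have uW: "u \<in> supported_kernel M S"
    unfolding u_def by (rule supported_kernel_lincomb[OF P(1) y(1)])
  have carrier: "P \<in> carrier_vec (dim_col M)" "y \<in> carrier_vec (dim_col M)"
    using P(1) y(1) by (auto simp: supported_kernel_iff)
  have eu: "e f * u $ f = (e f * P $ f) * (t - ratio f)" if "f \<in> S" for f
    using that S carrier P(3) by (auto simp: u_def ratio_def field_simps)
  have eu_nonneg: "\<forall>f\<in>D. 0 \<le> e f * u $ f"
  proof
    fix f assume f: "f \<in> D"
    hence "f \<in> S" by (simp add: D_def)
    have "0 < e f * P $ f" using P(3) \<open>f \<in> S\<close> by blast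
    moreover have "0 \<le> t - ratio f" using ratio_le[OF f] by simp
    ultimately show "0 \<le> e f * u $ f"
      unfolding eu[OF \<open>f \<in> S\<close>] by (simp add: mult_nonneg_nonneg)
  qed
  have "u $ g = 0" using eu[of g] g e by (auto simp: D_def)
  moreover have "\<exists>h\<in>D. 0 < e h * u $ h"
  proof (rule ccontr)
    assume "\<not> ?thesis"
    hence "\<And>f. f \<in> D \<Longrightarrow> u $ f = 0" using eu_nonneg e by (force simp: D_def)
    moreover have "y - t \<cdot>\<^sub>v P \<in> supported_kernel M S"
      by (rule supported_kernel_diff_smult[OF y(1) P(1)])
    moreover have "(y - t \<cdot>\<^sub>v P) $ f = 0" if f: "f < dim_col M" "f \<notin> S'" for f
    proof (cases "f \<in> S")
      case True
      hence "u $ f = 0" using f \<open>\<And>f. f \<in> D \<Longrightarrow> u $ f = 0\<close> by (simp add: D_def)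
      thus ?thesis using f carrier by (simp add: u_def)
    qed (use f P(1) y(1) carrier in \<open>auto simp: supported_kernel_iff\<close>)
    ultimately have "y - t \<cdot>\<^sub>v P \<in> supported_kernel M S'"
      by (auto simp: supported_kernel_iff)
    thus False using y_notin by blast
  qed
  moreover have "rational_vec u"
  proof -
    have "t \<in> \<rat>" using g P(2) y(2) e S carrier
      by (auto simp: ratio_def D_def rational_vec_def)
    thus ?thesis using P(2) y(2) carrier by (auto simp: u_def rational_vec_def)
  qed
  ultimately show thesis using that uW eu_nonneg g(1) unfolding D_def by blast
qed

lemma exists_kernel_vector_positive_on_subset:
  fixes e :: "nat \<Rightarrow> real"
  assumes S'S: "S' \<subseteq> S" and S': "S' \<subseteq> {..<dim_col M}" and e: "\<forall>f\<in>S'. e f = 1 \<or> e f = -1"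
    and u: "u \<in> supported_kernel M S" "rational_vec u"
    and Q: "Q \<in> supported_kernel M S'" "rational_vec Q" "\<forall>f\<in>S'. 1 \<le> e f * Q $ f"
  obtains z where "z \<in> supported_kernel M S" "rational_vec z" "\<forall>f\<in>S'. 0 < e f * z $ f"
    "\<forall>f<dim_col M. f \<notin> S' \<longrightarrow> z $ f = u $ f"
proof -
  define c where "c = 1 + (\<Sum>f\<in>S'. \<bar>u $ f\<bar>)"
  define z where "z = 1 \<cdot>\<^sub>v u + c \<cdot>\<^sub>v Q"
  have carrier: "u \<in> carrier_vec (dim_col M)" "Q \<in> carrier_vec (dim_col M)"
    using u(1) Q(1) by (auto simp: supported_kernel_iff)
  have c_pos: "0 < c" by (simp add: c_def add_pos_nonneg sum_nonneg)
  have "0 < e f * z $ f" if f: "f \<in> S'" for f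
  proof -
    have "f < dim_col M" using f S' by auto
    hence "e f * z $ f = e f * u $ f + c * (e f * Q $ f)"
      using carrier by (simp add: z_def algebra_simps)
    moreover have "\<bar>e f * u $ f\<bar> = \<bar>u $ f\<bar>" using e f by (auto simp: abs_mult)
    hence "\<bar>e f * u $ f\<bar> < c"
      using f finite_subset[OF S'] member_le_sum[of f S' "\<lambda>f. \<bar>u $ f\<bar>"] by (simp add: c_def)
    moreover have "c \<le> c * (e f * Q $ f)" using Q(3) f c_pos by (simp add: mult_le_cancel_left1)
    ultimately show ?thesis by linarith
  qed
  moreover have "rational_vec z"
  proof -
    have "c \<in> \<rat>" using u(2) carrier S' unfolding c_def rational_vec_def
      by (intro Rats_add Rats_sum) (auto simp: Rats_abs_iff)
    thus ?thesis using u(2) Q(2) carrier by (auto simp: z_def rational_vec_def)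
  qed
  moreover have "\<forall>f<dim_col M. f \<notin> S' \<longrightarrow> z $ f = u $ f"
    using Q(1) carrier by (simp add: z_def supported_kernel_iff)
  moreover have "Q \<in> supported_kernel M S" using Q(1) supported_kernel_mono[OF S'S] by blast
  ultimately show thesis using that supported_kernel_lincomb[OF u(1)] unfolding z_def by blast
qed

lemma strongly_connected_conformal_support:
  assumes os: "oriented_submatroid M S eps"
    and z: "z \<in> supported_kernel M S" "rational_vec z"
    and conformal: "\<forall>f\<in>S. 0 \<le> real_of_int (eps f) * z $ f"
    and T: "T = {f \<in> S. 0 < real_of_int (eps f) * z $ f}"
  shows "strongly_connected M T (\<lambda>f. if f \<in> T then eps f else 0)"
proof (rule strongly_connected_if_conformal_kernel_vector)
  show "oriented_submatroid M T (\<lambda>f. if f \<in> T then eps f else 0)"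
    using os T by (auto simp: oriented_submatroid_def)
  have "z $ f = 0" if "f < dim_col M" "f \<notin> T" for f
  proof (cases "f \<in> S")
    case True
    hence "real_of_int (eps f) * z $ f = 0" using conformal that T by force
    thus ?thesis using os True by (auto simp: oriented_submatroid_def)
  qed (use z(1) that in \<open>auto simp: supported_kernel_iff\<close>)
  thus "z \<in> supported_kernel M T" using z(1) by (auto simp: supported_kernel_iff)
qed (use z(2) T in auto)

lemma sc_covers_proper:
  assumes "sc_covers M (S, eps) (S', eps')"
  shows "S' \<subset> S" "\<forall>f\<in>S'. eps' f = eps f"
proof -
  have os: "oriented_submatroid M S eps" "oriented_submatroid M S' eps'"
    and le: "S' \<subseteq> S" "\<forall>f\<in>S'. eps' f = eps f" and ne: "(S, eps) \<noteq> (S', eps')"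
    using assms by (auto simp: sc_covers_def sc_less_def sc_le_def SC_def strongly_connected_def)
  have "eps' = eps" if "S' = S"
  proof
    fix f show "eps' f = eps f"
      by (cases "f \<in> S") (use os le that in \<open>auto simp: oriented_submatroid_def\<close>)
  qed
  thus "S' \<subset> S" using le ne by blast
  show "\<forall>f\<in>S'. eps' f = eps f" by (rule le(2))
qed

lemma sc_covers_kernel_vector_mod_circulation:
  assumes cov: "sc_covers M (S, eps) (S', eps')"
    and P: "signed_vec (dim_col M) p eps \<in> supported_kernel M S" "\<forall>f\<in>S. 1 \<le> p f"
    and y: "y \<in> supported_kernel M S" "rational_vec y"
  shows "\<exists>c. y - c \<cdot>\<^sub>v signed_vec (dim_col M) p eps \<in> supported_kernel M S'"
proof (rule ccontr)
  assume y_notin: "\<nexists>c. y - c \<cdot>\<^sub>v signed_vec (dim_col M) p eps \<in> supported_kernel M S'"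
  define e where "e f = real_of_int (eps f)" for f
  have sc: "strongly_connected M S eps" "strongly_connected M S' eps'"
    using cov by (auto simp: sc_covers_def SC_def)
  hence os: "oriented_submatroid M S eps" "oriented_submatroid M S' eps'"
    by (auto simp: strongly_connected_def)
  have S: "S \<subseteq> {..<dim_col M}" using os(1) by (simp add: oriented_submatroid_def)
  have sub: "S' \<subset> S" and agree: "\<forall>f\<in>S'. eps' f = eps f" by (rule sc_covers_proper[OF cov])+
  have e: "\<forall>f\<in>S. e f = 1 \<or> e f = -1" using os(1) by (auto simp: oriented_submatroid_def e_def)
  obtain u where u: "u \<in> supported_kernel M S" "rational_vec u" "\<forall>f\<in>S - S'. 0 \<le> e f * u $ f"
    and g: "\<exists>g\<in>S - S'. u $ g = 0" and h: "\<exists>h\<in>S - S'. 0 < e h * u $ h"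
  proof (rule exists_kernel_vector_nonneg_on_difference[OF sub S e P(1) rational_signed_vec _ y])
    show "\<forall>f\<in>S. 0 < e f * signed_vec (dim_col M) p eps $ f"
      using signed_vec_sign_ge_one[OF os(1) S P(2)] by (fastforce simp: e_def)
  qed (use y_notin in auto)
  obtain p' where p': "\<forall>f\<in>S'. 1 \<le> p' f" "signed_vec (dim_col M) p' eps' \<in> supported_kernel M S'"
    by (rule strongly_connected_positive_circulation[OF sc(2)])
  obtain z where z: "z \<in> supported_kernel M S" "rational_vec z" "\<forall>f\<in>S'. 0 < e f * z $ f"
    "\<forall>f<dim_col M. f \<notin> S' \<longrightarrow> z $ f = u $ f"
  proof (rule exists_kernel_vector_positive_on_subset[OF _ _ _ u(1,2) p'(2) rational_signed_vec])
    have "S' \<subseteq> {..<dim_col M}" using sub S by blast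
    thus "\<forall>f\<in>S'. 1 \<le> e f * signed_vec (dim_col M) p' eps' $ f"
      using signed_vec_sign_ge_one[OF os(2) _ p'(1)] agree by (simp add: e_def)
  qed (use sub S e in auto)
  define T where "T = {f \<in> S. 0 < e f * z $ f}"
  define epsT where "epsT = (\<lambda>f. if f \<in> T then eps f else 0)"
  have "\<forall>f\<in>S. 0 \<le> e f * z $ f" using u(3) z(3,4) S by (metis DiffI less_imp_le subsetD lessThan_iff)
  hence "(T, epsT) \<in> SC M"
    using strongly_connected_conformal_support[OF os(1) z(1,2) _ T_def[unfolded e_def]]
    by (simp add: SC_def epsT_def e_def)
  moreover have "T \<noteq> S"
  proof -
    obtain g where "g \<in> S - S'" "u $ g = 0" using g by blast
    hence "g \<in> S - T" using z(4) S by (auto simp: T_def)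
    thus ?thesis by blast
  qed
  hence "sc_less (S, eps) (T, epsT)" by (auto simp: sc_less_def sc_le_def T_def epsT_def)
  moreover have "T \<noteq> S'"
  proof -
    obtain h where "h \<in> S - S'" "0 < e h * u $ h" using h by blast
    hence "h \<in> T - S'" using z(4) S by (auto simp: T_def)
    thus ?thesis by blast
  qed
  hence "sc_less (T, epsT) (S', eps')"
    using z(3) sub agree by (auto simp: sc_less_def sc_le_def T_def epsT_def)
  ultimately show False using cov by (auto simp: sc_covers_def)
qed

lemma genus_sub_less:
  assumes sc: "strongly_connected M S eps" and sub: "S' \<subset> S"
  shows "genus_sub M S' < genus_sub M S"
proof -
  define n where "n = dim_col M"
  have os: "oriented_submatroid M S eps" using sc by (simp add: strongly_connected_def)
  hence S: "S \<subseteq> {..<n}" by (simp add: oriented_submatroid_def n_def)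
  obtain p where p: "\<forall>f\<in>S. 1 \<le> p f" "signed_vec n p eps \<in> supported_kernel M S"
    unfolding n_def by (rule strongly_connected_positive_circulation[OF sc])
  obtain f where f: "f \<in> S" "f \<notin> S'" using sub by blast
  hence "real_of_int (eps f) * signed_vec n p eps $ f \<noteq> 0"
    using signed_vec_sign_ge_one[OF os S p(1)] by fastforce
  hence "signed_vec n p eps \<notin> supported_kernel M S'"
    using f S by (auto simp: supported_kernel_iff n_def)
  moreover interpret V: vec_space "TYPE(real)" n .
  note subspaces = supported_kernel_subspace[of M, folded n_def]
  ultimately have "vectorspace.dim class_ring (V.vs (supported_kernel M S'))
      < vectorspace.dim class_ring (V.vs (supported_kernel M S))"
    using V.subspace_dim_less[OF V.fin_dim subspaces subspaces] supported_kernel_mono sub p(2)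
    by blast
  thus ?thesis using genus_sub_eq_dim[of S M] genus_sub_eq_dim[of S' M] S sub by (simp add: n_def)
qed

lemma sc_covers_genus_sub:
  assumes M: "rational_mat M" and cov: "sc_covers M (S, eps) (S', eps')"
  shows "genus_sub M S = Suc (genus_sub M S')"
proof -
  define n where "n = dim_col M"
  have sc: "strongly_connected M S eps" using cov by (simp add: sc_covers_def SC_def)
  hence S: "S \<subseteq> {..<n}" by (simp add: strongly_connected_def oriented_submatroid_def n_def)
  have sub: "S' \<subset> S" by (rule sc_covers_proper(1)[OF cov])
  obtain p where p: "\<forall>f\<in>S. 1 \<le> p f" "signed_vec n p eps \<in> supported_kernel M S"
    unfolding n_def by (rule strongly_connected_positive_circulation[OF sc])
  define P where "P = signed_vec n p eps"
  interpret V: vec_space "TYPE(real)" n .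
  have PW: "insert P (supported_kernel M S') \<subseteq> carrier_vec n"
    by (auto simp: P_def signed_vec_def supported_kernel_iff n_def)
  define Z where "Z = V.span (insert P (supported_kernel M S'))"
  have Z: "submodule class_ring Z V.V" unfolding Z_def by (rule V.span_is_submodule[OF PW])
  interpret Z: submodule class_ring Z V.V by (rule Z)
  have PZ: "insert P (supported_kernel M S') \<subseteq> Z" unfolding Z_def by (rule V.in_own_span[OF PW])
  have "supported_kernel M S \<subseteq> Z"
  proof (rule supported_kernel_subset_submodule[OF M Z[unfolded n_def]])
    fix y assume y: "y \<in> supported_kernel M S" "rational_vec y"
    obtain c where "y - c \<cdot>\<^sub>v P \<in> supported_kernel M S'"
      using sc_covers_kernel_vector_mod_circulation[OF cov p(2)[unfolded n_def] p(1) y]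
      unfolding P_def n_def by blast
    hence "(y - c \<cdot>\<^sub>v P) + c \<cdot>\<^sub>v P \<in> Z" using PZ Z.m_closed Z.smult_closed by auto
    moreover have "(y - c \<cdot>\<^sub>v P) + c \<cdot>\<^sub>v P = y"
      using y(1) PW by (auto simp: supported_kernel_iff n_def)
    ultimately show "y \<in> Z" by simp
  qed
  moreover note subspaces = supported_kernel_subspace[of M, folded n_def]
  ultimately have "vectorspace.dim class_ring (V.vs (supported_kernel M S))
      \<le> Suc (vectorspace.dim class_ring (V.vs (supported_kernel M S')))"
    by (intro V.subspace_dim_le_Suc[OF V.fin_dim subspaces subspaces, of P]) (use PW in \<open>auto simp: Z_def\<close>)
  hence "genus_sub M S \<le> Suc (genus_sub M S')"
    using genus_sub_eq_dim[of S M] genus_sub_eq_dim[of S' M] S sub by (simp add: n_def)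
  thus ?thesis using genus_sub_less[OF sc sub] by simp
qed

theorem mainTheorem3:
  fixes M :: "real mat" and S S' :: "nat set" and eps eps' :: "nat \<Rightarrow> int"
  assumes "totally_unimodular M"
  shows "((S, eps) \<in> SC M \<and> (S', eps') \<in> SC M \<and> sc_le (S, eps) (S', eps') \<and> S' \<subset> S
            \<longrightarrow> genus_sub M S' < genus_sub M S)
       \<and> (\<forall>x y. sc_covers M x y \<longrightarrow> sc_degree M y = sc_degree M x + 1)"
proof (intro conjI impI allI)
  assume "(S, eps) \<in> SC M \<and> (S', eps') \<in> SC M \<and> sc_le (S, eps) (S', eps') \<and> S' \<subset> S"
  thus "genus_sub M S' < genus_sub M S" using genus_sub_less by (auto simp: SC_def)
next
  fix x y assume "sc_covers M x y"
  hence "genus_sub M (fst x) = Suc (genus_sub M (fst y))"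
    using sc_covers_genus_sub[OF totally_unimodular_rational[OF assms]] by (cases x, cases y) simp
  thus "sc_degree M y = sc_degree M x + 1" by (simp add: sc_degree_def)
qed

end
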